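(* Let $\emptyset \neq \mathcal O \subseteq \{\cup,\cap,\overline{\phantom{c}},+,/\}$ and let $C$ be an $\mathcal O$-circuit. Then for every natural number $z \ge 2^{|C|}+1$ we have $z\in I(C)$ if and only if $2^{|C|}+1 \in I(C)$.
   Context: Natural numbers include $0$. For $A,B\subseteq\mathbb N$: $A\cup B$, $A\cap B$ are the usual operations, $\overline{A}=\mathbb N\setminus A$, $A+B=\{a+b: a\in A, b\in B\}$, $A\times B=\{a\cdot b: a\in A, b\in B\}$, and $A/B=\{c\in\mathbb N:\exists a\in A\ \exists b\in B\setminus\{0\}: a=c\cdot b\}$ (exact integer division without remainder or rounding). For $\emptyset\ne\mathcal O\subseteq\{\cup,\cap,\overline{\phantom{c}},+,\times,/\}$, an $\mathcal O$-circuit $C=(V,E,g_C,\alpha)$ is a finite acyclic directed multigraph with gate set $V\subseteq\mathbb N$, every gate having indegree $0$, $1$ or $2$, a designated output gate $g_C\in V$, and a labeling $\alpha$: gates of indegree $0$ (input gates) are labeled by natural numbers, gates of indegree $1$ are labeled $\overline{\phantom{c}}$ (allowed only if $\overline{\phantom{c}}\in\mathcal O$), and gates of indegree $2$ are labeled by an operation in $\mathcal O\setminus\{\overline{\phantom{c}}\}$. The result set $I(g)\subseteq\mathbb N$ is defined inductively: $I(g)=\{\alpha(g)\}$ for an input gate; $I(g)=\mathbb N\setminus I(p)$ for a complement gate with predecessor $p$; $I(g)=I(g_1)\,\sigma\,I(g_2)$ for a gate labeled $\sigma$ with predecessors $g_1\le g_2$ (a double edge from one gate gives $g_1=g_2$).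 $I(C)=I(g_C)$. A circuit is encoded as a bit string listing its gates in reverse topological order, each gate as the triple (gate name, label, list of predecessors), with all numbers (including input labels) in binary; $|C|$ denotes the length of this encoding. *)

theory Defs
  imports Main
begin

datatype setop = OUn | OInt | OCompl | OPlus | OTimes | ODiv

definition set_plus_nat :: "nat set \<Rightarrow> nat set \<Rightarrow> nat set" where
  "set_plus_nat A B = {a + b | a b. a \<in> A \<and> b \<in> B}"

definition set_times_nat :: "nat set \<Rightarrow> nat set \<Rightarrow> nat set" where
  "set_times_nat A B = {a * b | a b. a \<in> A \<and> b \<in> B}"

definition set_div_nat :: "nat set \<Rightarrow> nat set \<Rightarrow> nat set" where
  "set_div_nat A B = {c. \<exists>a\<in>A. \<exists>b\<in>B - {0}. a = c * b}"

fun apply_binop :: "setop \<Rightarrow> nat set \<Rightarrow> nat set \<Rightarrow> nat set" where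
  "apply_binop OUn A B = A \<union> B"
| "apply_binop OInt A B = A \<inter> B"
| "apply_binop OPlus A B = set_plus_nat A B"
| "apply_binop OTimes A B = set_times_nat A B"
| "apply_binop ODiv A B = set_div_nat A B"
| "apply_binop OCompl A B = UNIV - A"  (* never used for binary gates *)

datatype glabel = Inp nat | Gop setop

record circuit =
  gates :: "nat set"
  preds :: "nat \<Rightarrow> nat list"   \<comment> \<open>predecessors as a list (multigraph: repetitions allowed)\<close>
  lab   :: "nat \<Rightarrow> glabel"
  outg  :: nat

definition edge_rel :: "circuit \<Rightarrow> (nat \<times> nat) set" where
  "edge_rel C = {(p, g). g \<in> gates C \<and> p \<in> set (preds C g)}"

definition is_circuit :: "setop set \<Rightarrow> circuit \<Rightarrow> bool" where
  "is_circuit Ops C \<longleftrightarrow>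
     finite (gates C) \<and> outg C \<in> gates C \<and> acyclic (edge_rel C) \<and>
     (\<forall>g \<in> gates C.
        set (preds C g) \<subseteq> gates C \<and>
        (case lab C g of
           Inp n \<Rightarrow> preds C g = []
         | Gop \<sigma> \<Rightarrow> \<sigma> \<in> Ops \<and>
              (if \<sigma> = OCompl then length (preds C g) = 1 else length (preds C g) = 2)))"

definition eval_step :: "circuit \<Rightarrow> (nat \<Rightarrow> nat set) \<Rightarrow> nat \<Rightarrow> nat set" where
  "eval_step C f g =
     (case lab C g of
        Inp n \<Rightarrow> {n}
      | Gop \<sigma> \<Rightarrow>
          (if \<sigma> = OCompl then UNIV - f (hd (preds C g))
           else (let ps = preds C g; g1 = min (ps ! 0) (ps ! 1); g2 = max (ps ! 0) (ps ! 1)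
                 in apply_binop \<sigma> (f g1) (f g2))))"

text \<open>Iterating the step card(gates) times yields the correct value at every gate
  of an acyclic circuit (each gate has depth < card gates).\<close>
definition gate_val :: "circuit \<Rightarrow> nat \<Rightarrow> nat set" where
  "gate_val C = (eval_step C ^^ card (gates C)) (\<lambda>_. {})"

definition circuit_val :: "circuit \<Rightarrow> nat set" where
  "circuit_val C = gate_val C (outg C)"

datatype esym = S0 | S1 | SOpen | SClose | SComma | SUn | SInt | SCompl | SPlus | STimes | SDiv

fun bin :: "nat \<Rightarrow> esym list" where
  "bin n = (if n < 2 then [if n = 0 then S0 else S1]
            else bin (n div 2) @ [if n mod 2 = 0 then S0 else S1])"

fun op_sym :: "setop \<Rightarrow> esym" where
  "op_sym OUn = SUn" | "op_sym OInt = SInt" | "op_sym OCompl = SCompl"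
| "op_sym OPlus = SPlus" | "op_sym OTimes = STimes" | "op_sym ODiv = SDiv"

fun lab_enc :: "glabel \<Rightarrow> esym list" where
  "lab_enc (Inp n) = bin n"
| "lab_enc (Gop \<sigma>) = [op_sym \<sigma>]"

definition gate_enc :: "circuit \<Rightarrow> nat \<Rightarrow> esym list" where
  "gate_enc C g =
     [SOpen] @ bin g @ [SComma] @ lab_enc (lab C g) @ [SComma, SOpen]
     @ concat (map (\<lambda>p. bin p @ [SComma]) (preds C g)) @ [SClose, SClose]"

text \<open>Gates are listed in some fixed order (the length is independent of the order,
  so reverse topological order gives the same length).\<close>
definition circ_enc :: "circuit \<Rightarrow> esym list" where
  "circ_enc C = [SOpen] @ concat (map (gate_enc C) (sorted_list_of_set (gates C))) @ [SClose]"

fun sym_bits :: "esym \<Rightarrow> bool list" where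
  "sym_bits S0 = [False, False, False, False]"
| "sym_bits S1 = [False, False, False, True]"
| "sym_bits SOpen = [False, False, True, False]"
| "sym_bits SClose = [False, False, True, True]"
| "sym_bits SComma = [False, True, False, False]"
| "sym_bits SUn = [False, True, False, True]"
| "sym_bits SInt = [False, True, True, False]"
| "sym_bits SCompl = [False, True, True, True]"
| "sym_bits SPlus = [True, False, False, False]"
| "sym_bits STimes = [True, False, False, True]"
| "sym_bits SDiv = [True, False, True, False]"

definition circ_bits :: "circuit \<Rightarrow> bool list" where
  "circ_bits C = concat (map sym_bits (circ_enc C))"

definition circ_size :: "circuit \<Rightarrow> nat" where
  "circ_size C = length (circ_bits C)"

end

theory Submission
  imports Defs
begin

text \<open>Call a set constant from T if it contains either all or none of the numbers \<ge> T.
  Union, intersection, complement and division keep such a threshold and addition at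
  most doubles it (multiplication would not: {2} \<times> \<nat> is not constant from any T), so
  every round of evaluation doubles a threshold common to all gates. The encoding of C
  contains the binary representation of every input label besides at least one symbol
  per gate, so the labels lie below 2 ^ (|C| - #gates), and after the #gates rounds of
  evaluation the output is constant from 2 ^ |C|.\<close>

declare bin.simps [simp del]

definition constant_from :: "nat \<Rightarrow> nat set \<Rightarrow> bool" where
  "constant_from T S \<longleftrightarrow> (\<forall>z\<ge>T. z \<in> S \<longleftrightarrow> T \<in> S)"

lemma constant_from_iff: "constant_from T S \<longleftrightarrow> {T..} \<subseteq> S \<or> S \<subseteq> {..<T}"
  unfolding constant_from_def subset_iff atLeast_iff lessThan_iff
  by (metis not_le order_refl)

lemma constant_fromD: "constant_from T S \<Longrightarrow> T \<le> z \<Longrightarrow> z \<in> S \<longleftrightarrow> T \<in> S"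
  unfolding constant_from_def by blast

lemma constant_from_empty: "constant_from T {}"
  by (simp add: constant_from_def)

lemma constant_from_mono: "constant_from T S \<Longrightarrow> T \<le> T' \<Longrightarrow> constant_from T' S"
  unfolding constant_from_iff by auto

lemma constant_from_Compl: "constant_from T S \<Longrightarrow> constant_from T (UNIV - S)"
  unfolding constant_from_def by blast

lemma constant_from_Un: "constant_from T A \<Longrightarrow> constant_from T B \<Longrightarrow> constant_from T (A \<union> B)"
  unfolding constant_from_def by blast

lemma constant_from_Int: "constant_from T A \<Longrightarrow> constant_from T B \<Longrightarrow> constant_from T (A \<inter> B)"
  unfolding constant_from_def by blast

lemma set_plus_nat_commute: "set_plus_nat A B = set_plus_nat B A"
  unfolding set_plus_nat_def by (auto intro: add.commute)

lemma constant_from_set_plus_nat_left: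
  assumes "{T..} \<subseteq> A" and "constant_from T B"
  shows "constant_from (2 * T) (set_plus_nat A B)"
proof (cases "B = {}")
  case True
  then show ?thesis by (simp add: set_plus_nat_def constant_from_empty)
next
  case False
  have "\<exists>b\<in>B. b \<le> T"
    using False assms(2) unfolding constant_from_iff by (auto intro: less_imp_le)
  then obtain b where b: "b \<in> B" "b \<le> T" ..
  have "z \<in> set_plus_nat A B" if "2 * T \<le> z" for z
  proof -
    have "z - b \<in> A" using assms(1) that b(2) by auto
    moreover have "z = (z - b) + b" using that b(2) by simp
    ultimately show ?thesis using b(1) unfolding set_plus_nat_def by blast
  qed
  then show ?thesis unfolding constant_from_iff by auto
qed

lemma constant_from_set_plus_nat:
  assumes A: "constant_from T A" and B: "constant_from T B"
  shows "constant_from (2 * T) (set_plus_nat A B)"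
proof (cases "{T..} \<subseteq> A \<or> {T..} \<subseteq> B")
  case True
  then show ?thesis
    using constant_from_set_plus_nat_left A B set_plus_nat_commute by metis
next
  case False
  then have "A \<subseteq> {..<T}" "B \<subseteq> {..<T}" using A B unfolding constant_from_iff by auto
  then have "set_plus_nat A B \<subseteq> {..<2 * T}" unfolding set_plus_nat_def by fastforce
  then show ?thesis unfolding constant_from_iff by blast
qed

lemma constant_from_set_div_nat:
  assumes "constant_from T A"
  shows "constant_from T (set_div_nat A B)"
proof (cases "B - {0} = {}")
  case True
  then have "set_div_nat A B = {}" unfolding set_div_nat_def by blast
  then show ?thesis by (simp add: constant_from_empty)
next
  case False
  then obtain b where b: "b \<in> B" "b \<noteq> 0" by auto
  from assms consider "{T..} \<subseteq> A" | "A \<subseteq> {..<T}" unfolding constant_from_iff by blast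
  then show ?thesis
  proof cases
    case 1
    have "z \<in> set_div_nat A B" if "T \<le> z" for z
    proof -
      have "z \<le> z * b" using b(2) by simp
      then have "T \<le> z * b" using that by linarith
      then have "z * b \<in> A" using 1 by auto
      then show ?thesis using b unfolding set_div_nat_def by blast
    qed
    then show ?thesis unfolding constant_from_iff by blast
  next
    case 2
    have "c < T" if "a \<in> A" "a = c * d" "d \<noteq> 0" for a c d
      using 2 that by (auto intro: le_less_trans[of c a T])
    then have "set_div_nat A B \<subseteq> {..<T}" unfolding set_div_nat_def by blast
    then show ?thesis unfolding constant_from_iff ..
  qed
qed

lemma constant_from_apply_binop:
  assumes "\<sigma> \<in> {OUn, OInt, OPlus, ODiv}" and "constant_from T A" and "constant_from T B"
  shows "constant_from (2 * T) (apply_binop \<sigma> A B)"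
  using assms constant_from_Un constant_from_Int constant_from_set_plus_nat
    constant_from_set_div_nat constant_from_mono[of T _ "2 * T"]
  by auto

lemma is_circuit_binop_preds:
  assumes "is_circuit Ops C" and "g \<in> gates C" and "lab C g = Gop \<sigma>" and "\<sigma> \<noteq> OCompl"
  obtains p q where "preds C g = [p, q]" and "p \<in> gates C" and "q \<in> gates C" and "\<sigma> \<in> Ops"
proof -
  have "length (preds C g) = 2" "set (preds C g) \<subseteq> gates C" "\<sigma> \<in> Ops"
    using assms unfolding is_circuit_def by force+
  then show ?thesis
    using that by (auto simp: numeral_2_eq_2 length_Suc_conv)
qed

lemma is_circuit_compl_pred:
  assumes "is_circuit Ops C" and "g \<in> gates C" and "lab C g = Gop OCompl"
  shows "hd (preds C g) \<in> gates C"
proof -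
  have "length (preds C g) = 1" "set (preds C g) \<subseteq> gates C"
    using assms unfolding is_circuit_def by force+
  then show ?thesis by (cases "preds C g") auto
qed

lemma constant_from_eval_step:
  assumes C: "is_circuit Ops C" and Ops: "OTimes \<notin> Ops"
    and f: "\<forall>g\<in>gates C. constant_from T (f g)"
    and inputs: "\<forall>g\<in>gates C. \<forall>n. lab C g = Inp n \<longrightarrow> n < T"
    and g: "g \<in> gates C"
  shows "constant_from (2 * T) (eval_step C f g)"
proof (cases "lab C g")
  case (Inp n)
  then have "eval_step C f g \<subseteq> {..<2 * T}" using inputs g by (auto simp: eval_step_def)
  then show ?thesis unfolding constant_from_iff ..
next
  case (Gop \<sigma>)
  show ?thesis
  proof (cases "\<sigma> = OCompl")
    case True
    then have "constant_from T (eval_step C f g)"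
      using Gop f is_circuit_compl_pred[OF C g] constant_from_Compl by (simp add: eval_step_def)
    then show ?thesis by (rule constant_from_mono) simp
  next
    case False
    then obtain p q where pq: "preds C g = [p, q]" "p \<in> gates C" "q \<in> gates C" and "\<sigma> \<in> Ops"
      using is_circuit_binop_preds[OF C g Gop] by blast
    then have "\<sigma> \<in> {OUn, OInt, OPlus, ODiv}" using False Ops by (cases \<sigma>) auto
    moreover have "constant_from T (f (min p q))" "constant_from T (f (max p q))"
      using f pq by (simp_all add: min_def max_def)
    ultimately show ?thesis
      using Gop False pq constant_from_apply_binop by (simp add: eval_step_def)
  qed
qed

lemma constant_from_eval_iterate:
  assumes C: "is_circuit Ops C" and Ops: "OTimes \<notin> Ops"
    and inputs: "\<forall>g\<in>gates C. \<forall>n. lab C g = Inp n \<longrightarrow> n < M"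
  shows "\<forall>g\<in>gates C. constant_from (2 ^ k * M) ((eval_step C ^^ k) (\<lambda>_. {}) g)"
proof (induction k)
  case 0
  then show ?case by (simp add: constant_from_empty)
next
  case (Suc k)
  have "M \<le> 2 ^ k * M" by simp
  then have "\<forall>g\<in>gates C. \<forall>n. lab C g = Inp n \<longrightarrow> n < 2 ^ k * M"
    using inputs by (meson less_le_trans)
  then show ?case
    using constant_from_eval_step[OF C Ops Suc.IH] by (simp add: mult.assoc)
qed

lemma less_two_power_length_bin: "n < 2 ^ length (bin n)"
proof (induction n rule: bin.induct)
  case (1 n)
  then show ?case by (subst bin.simps) auto
qed

lemma length_circ_enc:
  assumes "finite (gates C)"
  shows "length (circ_enc C) = 2 + (\<Sum>g\<in>gates C. length (gate_enc C g))"
  using assms by (simp add: circ_enc_def length_concat sum_list_distinct_conv_sum_set comp_def)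

lemma card_le_sum_length_gate_enc: "card A \<le> (\<Sum>g\<in>A. length (gate_enc C g))"
proof -
  have "card A = (\<Sum>g\<in>A. 1)" by simp
  also have "\<dots> \<le> (\<Sum>g\<in>A. length (gate_enc C g))"
    by (rule sum_mono) (simp add: gate_enc_def)
  finally show ?thesis .
qed

lemma card_gates_le_length_circ_enc:
  assumes "finite (gates C)"
  shows "card (gates C) \<le> length (circ_enc C)"
  using length_circ_enc[OF assms] card_le_sum_length_gate_enc[of "gates C" C] by simp

lemma length_bin_input_le:
  assumes fin: "finite (gates C)" and g: "g \<in> gates C" and "lab C g = Inp n"
  shows "length (bin n) \<le> length (circ_enc C) - card (gates C)"
proof -
  let ?l = "\<lambda>h. length (gate_enc C h)"
  have "length (bin n) + 1 \<le> ?l g"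
    using \<open>lab C g = Inp n\<close> by (simp add: gate_enc_def)
  moreover have "card (gates C) = card (gates C - {g}) + 1"
    using card_Suc_Diff1[OF fin g] by simp
  ultimately show ?thesis
    using length_circ_enc[OF fin] sum.remove[OF fin g, of ?l]
      card_le_sum_length_gate_enc[of "gates C - {g}" C] by linarith
qed

lemma length_circ_enc_le_circ_size: "length (circ_enc C) \<le> circ_size C"
proof -
  have "length (sym_bits s) = 4" for s by (cases s) simp_all
  then show ?thesis by (simp add: circ_size_def circ_bits_def length_concat comp_def sum_list_triv)
qed

theorem corollary1:
  fixes Ops :: "setop set" and C :: circuit and z :: nat
  assumes "Ops \<noteq> {}" and "Ops \<subseteq> {OUn, OInt, OCompl, OPlus, ODiv}"
    and "is_circuit Ops C"
    and "z \<ge> 2 ^ circ_size C + 1"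
  shows "z \<in> circuit_val C \<longleftrightarrow> 2 ^ circ_size C + 1 \<in> circuit_val C"
proof -
  let ?K = "length (circ_enc C)" and ?N = "card (gates C)"
  have fin: "finite (gates C)" and out: "outg C \<in> gates C"
    using assms(3) unfolding is_circuit_def by auto
  have "OTimes \<notin> Ops" using assms(2) by auto
  moreover have "\<forall>g\<in>gates C. \<forall>n. lab C g = Inp n \<longrightarrow> n < 2 ^ (?K - ?N)"
    using length_bin_input_le[OF fin] less_two_power_length_bin
    by (meson less_le_trans one_le_numeral power_increasing)
  ultimately have "constant_from (2 ^ ?N * 2 ^ (?K - ?N)) (circuit_val C)"
    using constant_from_eval_iterate[OF assms(3)] out
    unfolding circuit_val_def gate_val_def by blast
  moreover have "2 ^ ?N * 2 ^ (?K - ?N) = (2::nat) ^ ?K"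
    using card_gates_le_length_circ_enc[OF fin] by (simp flip: power_add)
  moreover have "(2::nat) ^ ?K \<le> 2 ^ circ_size C + 1"
    using length_circ_enc_le_circ_size[of C] by (simp add: le_SucI power_increasing)
  ultimately have "constant_from (2 ^ circ_size C + 1) (circuit_val C)"
    using constant_from_mono by metis
  then show ?thesis using constant_fromD assms(4) by blast
qed

end
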